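(* Let $L=dN$ with integers $d\ge2$, $N\ge1$, consider the flat initial condition, and let $0<|z|<r_0$ with $\mathcal E_{\rm flat}(z)\ne0$. Then for $v\in\mathcal R_z$ and $u\in\mathcal L_z$, $$\mathrm{ch}_{\rm flat}(v,u;z)=\begin{cases}\dfrac{q'_{z,\mathrm R}(v)\,u^N(u+1)^{d-1}}{q_{z,\mathrm R}(u)\,v^N(v+1)^{d-1}}(u-v),&\text{if }u(u+1)^{d-1}=v(v+1)^{d-1},\\[2mm] 0,&\text{otherwise.}\end{cases}$$
   Context: $\rho=N/L=1/d$, $r_0=\rho^\rho(1-\rho)^{1-\rho}$. Flat initial condition $Y=(y_1,\dots,y_N)$, $y_i=(i-N)d$. For $0<|z|<r_0$, $\mathcal L_z$ ($\mathcal R_z$) is the set of roots of $w^N(w+1)^{L-N}=z^L$ with real part $<-\rho$ ($>-\rho$); $q_{z,\mathrm R}(w)=\prod_{v\in\mathcal R_z}(w-v)$. $\mathcal G_\lambda(W)=\det[w_i^{N-j}(w_i+1)^{\lambda_j}]/\det[w_i^{N-j}]$; $\lambda(Y)=(y_N,y_{N-1}+1,\dots,y_1+N-1)$; $\mathcal E_{\rm flat}(z)=\mathcal G_{\lambda(Y)}(\mathcal R_z)$ and $\mathrm{ch}_{\rm flat}(v,u;z)=\mathcal G_{\lambda(Y)}(\mathcal R_z\cup\{u\}\setminus\{v\})/\mathcal E_{\rm flat}(z)$. *)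

theory Defs
  imports Complex_Main "HOL-Analysis.Derivative" "Jordan_Normal_Form.Determinant"
begin

(* Parameters: d >= 2, N >= 1, L = d*N, rho = N/L = 1/d. *)

definition rho :: "nat \<Rightarrow> real" where
  "rho d = 1 / real d"

definition r0 :: "nat \<Rightarrow> real" where
  "r0 d = rho d powr rho d * (1 - rho d) powr (1 - rho d)"

definition roots_eq :: "nat \<Rightarrow> nat \<Rightarrow> complex \<Rightarrow> complex set" where
  "roots_eq d N z = {w. w ^ N * (w + 1) ^ (d * N - N) = z ^ (d * N)}"

definition Lset :: "nat \<Rightarrow> nat \<Rightarrow> complex \<Rightarrow> complex set" where
  "Lset d N z = {w \<in> roots_eq d N z. Re w < - rho d}"

definition Rset :: "nat \<Rightarrow> nat \<Rightarrow> complex \<Rightarrow> complex set" where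
  "Rset d N z = {w \<in> roots_eq d N z. Re w > - rho d}"

definition qR :: "nat \<Rightarrow> nat \<Rightarrow> complex \<Rightarrow> complex \<Rightarrow> complex" where
  "qR d N z w = (\<Prod>v\<in>Rset d N z. w - v)"

(* an enumeration w_1..w_N (0-indexed) of an N-element set W;
   G below is symmetric in the w_i so the choice is irrelevant *)
definition enum_set :: "nat \<Rightarrow> complex set \<Rightarrow> nat \<Rightarrow> complex" where
  "enum_set N W = (SOME f. bij_betw f {..<N} W)"

(* G_lambda(W) = det[w_i^(N-j) (w_i+1)^(lambda_j)] / det[w_i^(N-j)],
   lambda given 1-indexed: lambda j for j = 1..N; matrix indices 0-based *)
definition G :: "nat \<Rightarrow> (nat \<Rightarrow> int) \<Rightarrow> complex set \<Rightarrow> complex" where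
  "G N lam W =
     (let w = enum_set N W in
      det (mat N N (\<lambda>(i, j). w i ^ (N - Suc j) * (w i + 1) powi lam (Suc j)))
      / det (mat N N (\<lambda>(i, j). w i ^ (N - Suc j))))"

(* lambda(Y) = (y_N, y_{N-1}+1, ..., y_1+N-1), Y 1-indexed: lambda_j = y_{N+1-j} + j - 1 *)
definition lambdaY :: "nat \<Rightarrow> (nat \<Rightarrow> int) \<Rightarrow> nat \<Rightarrow> int" where
  "lambdaY N Y j = Y (N + 1 - j) + int j - 1"

definition Yflat :: "nat \<Rightarrow> nat \<Rightarrow> nat \<Rightarrow> int" where
  "Yflat d N i = (int i - int N) * int d"

definition E_flat :: "nat \<Rightarrow> nat \<Rightarrow> complex \<Rightarrow> complex" where
  "E_flat d N z = G N (lambdaY N (Yflat d N)) (Rset d N z)"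

definition ch_flat :: "nat \<Rightarrow> nat \<Rightarrow> complex \<Rightarrow> complex \<Rightarrow> complex \<Rightarrow> complex" where
  "ch_flat d N v u z =
     G N (lambdaY N (Yflat d N)) ((Rset d N z \<union> {u}) - {v}) / E_flat d N z"

end

(*
  With g(w) = w (w + 1)^(d-1), the Bethe equation reads g(w)^N = z^L.  For the flat initial
  condition lambda_j = -(j - 1)(d - 1), so the entry w^(N-j) (w + 1)^lambda_j equals
  w^(N-1) g(w)^-(j-1): the numerator of G_lambda(W) is prod W^(N-1) times a Vandermonde
  determinant in the nodes 1/g(w).
  For 0 < |z| < r0 each N-th root c of z^L has exactly one preimage under g in the half
  plane Re w > -rho (Banach's fixed point theorem for w |-> c / (w + 1)^(d-1) on a small disc),
  so g maps R_z bijectively onto these roots, and g(u) = g(v') for some v' in R_z.  If v' is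
  not v, the numerator for W = (R_z - {v}) + {u} has two equal rows and vanishes.  If v' = v,
  the numerator is unchanged, and replacing the node v by u multiplies the Vandermonde
  determinant by prod_(x in R_z - {v}) (u - x) / (v - x) = q(u) / ((u - v) q'(v)).
*)

theory Submission
  imports Defs "HOL-Computational_Algebra.Polynomial"
begin

lemma norm_plus_one_ge:
  fixes w :: "'a :: real_normed_algebra_1"
  assumes "norm w \<le> r"
  shows "1 - r \<le> norm (w + 1)"
  using assms norm_triangle_ineq4[of "w + 1" w] by simp

lemma dist_divide_shift_power_le:
  fixes c x y :: complex
  assumes r: "0 \<le> r" "r < 1" and xy: "cmod x \<le> r" "cmod y \<le> r"
  shows "dist (c / (x + 1) ^ m) (c / (y + 1) ^ m) \<le> real m * cmod c / (1 - r) ^ Suc m * dist x y"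
proof -
  define S where "S = cball (0::complex) r"
  have far_from_pole: "1 - r \<le> cmod (w + 1)" if "w \<in> S" for w
    using that norm_plus_one_ge[of w r] by (simp add: S_def)
  have deriv: "((\<lambda>w. c / (w + 1) ^ m) has_field_derivative - (of_nat m * c / (w + 1) ^ Suc m))
      (at w within S)" if "w \<in> S" for w
  proof -
    have "of_nat m * (w + 1) ^ (m - 1) * (w + 1) = of_nat m * (w + 1) ^ m"
      by (cases m) simp_all
    then show ?thesis
      using far_from_pole[OF that] r by (auto intro!: derivative_eq_intros simp: divide_simps)
  qed
  have bound: "cmod (- (of_nat m * c / (w + 1) ^ Suc m)) \<le> real m * cmod c / (1 - r) ^ Suc m"
    if "w \<in> S" for w
  proof -
    have "(1 - r) ^ Suc m \<le> cmod (w + 1) ^ Suc m"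
      using far_from_pole[OF that] r by (intro power_mono) auto
    then show ?thesis
      using r by (simp add: norm_divide norm_mult norm_power frac_le)
  qed
  show ?thesis
    using field_differentiable_bound[OF _ deriv bound, of x y] xy by (simp add: S_def dist_norm)
qed

lemma ex1_root_in_cball:
  fixes c :: complex and r :: real
  assumes r: "0 \<le> r" "r < 1"
    and self_map: "cmod c \<le> r * (1 - r) ^ m"
    and contraction: "real m * cmod c < (1 - r) ^ Suc m"
  shows "\<exists>!w. w \<in> cball 0 r \<and> w * (w + 1) ^ m = c"
proof -
  define S where "S = cball (0::complex) r"
  define T where "T w = c / (w + 1) ^ m" for w
  define k where "k = real m * cmod c / (1 - r) ^ Suc m"
  have far_from_pole: "1 - r \<le> cmod (w + 1)" if "w \<in> S" for w
    using that norm_plus_one_ge[of w r] by (simp add: S_def)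
  have "cmod (T w) \<le> r" if "w \<in> S" for w
  proof -
    have "(1 - r) ^ m \<le> cmod (w + 1) ^ m"
      using far_from_pole[OF that] r by (intro power_mono) auto
    then have "cmod c / cmod (w + 1) ^ m \<le> cmod c / (1 - r) ^ m"
      using r far_from_pole[OF that] by (intro divide_left_mono mult_pos_pos zero_less_power) auto
    also have "\<dots> \<le> r"
      using self_map r by (simp add: divide_le_eq mult.commute)
    finally show ?thesis by (simp add: T_def norm_divide norm_power)
  qed
  then have "T ` S \<subseteq> S" by (auto simp: S_def)
  moreover have "0 \<le> k" "k < 1"
    using contraction r by (simp_all add: k_def)
  moreover have "dist (T x) (T y) \<le> k * dist x y" if "x \<in> S" "y \<in> S" for x y
    using dist_divide_shift_power_le[OF r] that by (simp add: S_def T_def k_def)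
  ultimately have "\<exists>!w \<in> S. T w = w"
    using r by (intro Banach_fix[where c = k]) (auto simp: S_def intro: compact_imp_complete)
  moreover have "T w = w \<longleftrightarrow> w * (w + 1) ^ m = c" if "w \<in> S" for w
  proof -
    have "w + 1 \<noteq> 0" using far_from_pole[OF that] r by auto
    then show ?thesis by (auto simp: T_def field_simps)
  qed
  ultimately show ?thesis unfolding S_def[symmetric] by blast
qed

lemma norm_mult_shift_power_ge:
  fixes w :: complex
  assumes "\<rho> \<le> 1" and "- \<rho> < Re w"
  shows "cmod w * (1 - \<rho>) ^ m \<le> cmod (w * (w + 1) ^ m)"
proof -
  have "1 - \<rho> \<le> cmod (w + 1)"
    using assms complex_Re_le_cmod[of "w + 1"] by simp
  then have "(1 - \<rho>) ^ m \<le> cmod (w + 1) ^ m"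
    using assms by (intro power_mono) auto
  then show ?thesis by (simp add: norm_mult norm_power mult_left_mono)
qed

lemma ex1_root_in_half_plane:
  fixes c :: complex and \<rho> :: real
  assumes \<rho>: "0 < \<rho>" "\<rho> < 1" "real m * \<rho> \<le> 1 - \<rho>"
    and c: "cmod c < \<rho> * (1 - \<rho>) ^ m"
  shows "\<exists>!w. - \<rho> < Re w \<and> w * (w + 1) ^ m = c"
proof -
  define r where "r = cmod c / (1 - \<rho>) ^ m"
  have r: "0 \<le> r" "r < \<rho>"
    using \<rho> c by (auto simp: r_def divide_less_eq)
  have "cmod c \<le> r * (1 - r) ^ m"
  proof -
    have "cmod c = r * (1 - \<rho>) ^ m" using \<rho> by (simp add: r_def)
    also have "\<dots> \<le> r * (1 - r) ^ m"
      using r \<rho> by (intro mult_left_mono power_mono) auto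
    finally show ?thesis .
  qed
  moreover have "real m * cmod c < (1 - r) ^ Suc m"
  proof -
    have "real m * cmod c \<le> real m * (\<rho> * (1 - \<rho>) ^ m)"
      using c by (intro mult_left_mono) auto
    also have "\<dots> = real m * \<rho> * (1 - \<rho>) ^ m"
      by (simp only: mult.assoc)
    also have "\<dots> \<le> (1 - \<rho>) * (1 - \<rho>) ^ m"
      using \<rho> by (intro mult_right_mono) auto
    also have "\<dots> = (1 - \<rho>) ^ Suc m" by simp
    also have "\<dots> < (1 - r) ^ Suc m"
      using r \<rho> by (intro power_strict_mono) auto
    finally show ?thesis .
  qed
  ultimately have "\<exists>!w. w \<in> cball 0 r \<and> w * (w + 1) ^ m = c"
    using r \<rho> by (intro ex1_root_in_cball) auto
  then obtain w0 where w0: "w0 \<in> cball 0 r" "w0 * (w0 + 1) ^ m = c"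
    and unique: "\<And>w. w \<in> cball 0 r \<Longrightarrow> w * (w + 1) ^ m = c \<Longrightarrow> w = w0"
    by blast
  show ?thesis
  proof (rule ex1I[of _ w0])
    show "- \<rho> < Re w0 \<and> w0 * (w0 + 1) ^ m = c"
      using w0 r abs_Re_le_cmod[of w0] by auto
  next
    fix w assume w: "- \<rho> < Re w \<and> w * (w + 1) ^ m = c"
    then have "cmod w * (1 - \<rho>) ^ m \<le> cmod c"
      using norm_mult_shift_power_ge[of \<rho> w m] \<rho> by auto
    then have "cmod w \<le> r"
      using \<rho> by (simp add: r_def le_divide_eq)
    then show "w = w0" using unique w by auto
  qed
qed

lemma r0_power:
  assumes "d \<ge> 2"
  shows "r0 d ^ d = rho d * (1 - rho d) ^ (d - 1)"
proof -
  have \<rho>: "0 < rho d" "0 < 1 - rho d" "real d * rho d = 1" "real d * (1 - rho d) = real (d - 1)"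
    using assms by (auto simp: rho_def field_simps of_nat_diff)
  have "r0 d ^ d = rho d powr (real d * rho d) * (1 - rho d) powr (real d * (1 - rho d))"
    using \<rho>(1,2) by (simp add: r0_def power_mult_distrib powr_power)
  also have "\<dots> = rho d * (1 - rho d) ^ (d - 1)"
    using \<rho> by (simp add: powr_realpow)
  finally show ?thesis .
qed

definition bethe_base :: "nat \<Rightarrow> complex \<Rightarrow> complex" where
  "bethe_base d w = w * (w + 1) ^ (d - 1)"

lemma roots_eq_bethe_base: "roots_eq d N z = {w. bethe_base d w ^ N = z ^ (d * N)}"
proof -
  have "d * N - N = (d - 1) * N" by (simp add: diff_mult_distrib)
  then show ?thesis by (simp add: roots_eq_def bethe_base_def power_mult_distrib power_mult)
qed

lemma roots_eq_nonzero:
  assumes "w \<in> roots_eq d N z" "z \<noteq> 0" "d \<ge> 2" "N \<ge> 1"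
  shows "w \<noteq> 0" "w + 1 \<noteq> 0"
  using assms by (auto simp: roots_eq_def power_0_left)

lemma bij_betw_bethe_base_Rset:
  assumes d: "d \<ge> 2" and N: "N \<ge> 1" and z: "0 < cmod z" "cmod z < r0 d"
  shows "bij_betw (bethe_base d) (Rset d N z) {c. c ^ N = z ^ (d * N)}"
proof -
  have ex1: "\<exists>!w. - rho d < Re w \<and> bethe_base d w = c" if c: "c ^ N = z ^ (d * N)" for c
  proof -
    have "cmod c ^ N = (cmod z ^ d) ^ N"
      using arg_cong[OF c, of cmod] by (simp add: norm_power power_mult)
    then have "cmod c = cmod z ^ d"
      using N by (auto intro: power_eq_imp_eq_base)
    also have "\<dots> < r0 d ^ d"
      using z d by (intro power_strict_mono) auto
    finally have "cmod c < rho d * (1 - rho d) ^ (d - 1)"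
      using r0_power[OF d] by simp
    moreover have "0 < rho d" "rho d < 1" "real (d - 1) * rho d \<le> 1 - rho d"
      using d by (auto simp: rho_def field_simps of_nat_diff)
    ultimately show ?thesis
      unfolding bethe_base_def by (intro ex1_root_in_half_plane) auto
  qed
  show ?thesis
    unfolding bij_betw_def inj_on_def
  proof (intro conjI ballI impI equalityI subsetI)
    fix x y assume "x \<in> Rset d N z" "y \<in> Rset d N z" "bethe_base d x = bethe_base d y"
    with ex1[of "bethe_base d x"] show "x = y"
      by (auto simp: Rset_def roots_eq_bethe_base)
  next
    fix c assume "c \<in> bethe_base d ` Rset d N z"
    then show "c \<in> {c. c ^ N = z ^ (d * N)}"
      by (auto simp: Rset_def roots_eq_bethe_base)
  next
    fix c assume c: "c \<in> {c. c ^ N = z ^ (d * N)}"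
    with ex1[of c] obtain w where "- rho d < Re w" "bethe_base d w = c" by auto
    with c show "c \<in> bethe_base d ` Rset d N z"
      by (auto simp: Rset_def roots_eq_bethe_base)
  qed
qed

lemma Rset_finite_card:
  assumes "d \<ge> 2" "N \<ge> 1" "0 < cmod z" "cmod z < r0 d"
  shows "finite (Rset d N z)" "card (Rset d N z) = N"
proof -
  have roots: "card {c :: complex. c ^ N = z ^ (d * N)} = N"
    using assms by (intro card_nth_roots) auto
  then have "finite {c :: complex. c ^ N = z ^ (d * N)}"
    using assms(2) by (intro card_ge_0_finite) auto
  with roots bij_betw_bethe_base_Rset[OF assms]
  show "finite (Rset d N z)" "card (Rset d N z) = N"
    by (auto dest: bij_betw_finite bij_betw_same_card)
qed

definition vandermonde :: "nat \<Rightarrow> (nat \<Rightarrow> 'a :: comm_ring_1) \<Rightarrow> 'a mat" where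
  "vandermonde n x = mat n n (\<lambda>(i, j). x i ^ (n - Suc j))"

lemma permutes_of_bij_betw:
  fixes n :: nat
  assumes f: "bij_betw f {..<n} W" and h: "bij_betw h {..<n} W"
  obtains p where "p permutes {0..<n}" "\<And>i. i < n \<Longrightarrow> h i = f (p i)"
proof -
  define p where "p i = (if i < n then inv_into {..<n} f (h i) else i)" for i
  have "bij_betw (inv_into {..<n} f \<circ> h) {..<n} {..<n}"
    using h bij_betw_inv_into[OF f] by (rule bij_betw_trans)
  then have "bij_betw p {..<n} {..<n}"
    by (rule bij_betw_cong[THEN iffD1, rotated]) (auto simp: p_def)
  then have "p permutes {..<n}"
    by (rule bij_imp_permutes) (simp add: p_def)
  then have "p permutes {0..<n}"
    by (simp add: atLeast0LessThan)
  moreover have "h i = f (p i)" if "i < n" for i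
  proof -
    have "h i \<in> f ` {..<n}" using f h that by (auto simp: bij_betw_def)
    then show ?thesis using that by (simp add: p_def f_inv_into_f)
  qed
  ultimately show ?thesis using that by blast
qed

lemma det_mat_rows_permute:
  assumes p: "p permutes {0..<n}" and h: "\<And>i. i < n \<Longrightarrow> h i = f (p i)"
  shows "det (mat n n (\<lambda>(i, j). F (h i) j)) = signof p * det (mat n n (\<lambda>(i, j). F (f i) j))"
proof -
  have "det (mat n n (\<lambda>(i, j). F (h i) j))
      = det (mat n n (\<lambda>(i, j). mat n n (\<lambda>(i, j). F (f i) j) $$ (p i, j)))"
    using h permutes_in_image[OF p] by (intro arg_cong[where f = det] eq_matI) auto
  also have "\<dots> = signof p * det (mat n n (\<lambda>(i, j). F (f i) j))"
    by (rule det_permute_rows[OF _ p]) simp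
  finally show ?thesis .
qed

lemma G_eq_enumeration:
  assumes h: "bij_betw h {..<N} W"
  shows "G N lam W = det (mat N N (\<lambda>(i, j). h i ^ (N - Suc j) * (h i + 1) powi lam (Suc j)))
    / det (vandermonde N h)"
proof -
  have e: "bij_betw (enum_set N W) {..<N} W"
    unfolding enum_set_def using h by (rule someI[of "\<lambda>f. bij_betw f {..<N} W"])
  obtain p where p: "p permutes {0..<N}" "\<And>i. i < N \<Longrightarrow> enum_set N W i = h (p i)"
    using permutes_of_bij_betw[OF h e] by blast
  have "signof p \<noteq> (0 :: complex)" by (simp add: sign_def)
  then show ?thesis
    unfolding G_def Let_def vandermonde_def
    using det_mat_rows_permute[where h = "enum_set N W" and f = h, OF p,
        of "\<lambda>x j. x ^ (N - Suc j) * (x + 1) powi lam (Suc j)"]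
      det_mat_rows_permute[where h = "enum_set N W" and f = h, OF p, of "\<lambda>x j. x ^ (N - Suc j)"]
    by simp
qed

lemma det_mat_scale_rows:
  fixes a :: "nat \<Rightarrow> 'a :: comm_ring_1"
  shows "det (mat n n (\<lambda>(i, j). a i * b i j)) = (\<Prod>i<n. a i) * det (mat n n (\<lambda>(i, j). b i j))"
proof -
  have "det (mat n n (\<lambda>(i, j). a i * b i j)) =
     (\<Sum>p\<in>{p. p permutes {0..<n}}. signof p * (\<Prod>i=0..<n. a i * b i (p i)))"
    by (simp add: det_def)
  also have "\<dots> = (\<Sum>p\<in>{p. p permutes {0..<n}}. (\<Prod>i<n. a i) * (signof p * (\<Prod>i=0..<n. b i (p i))))"
    by (intro sum.cong refl) (simp add: prod.distrib atLeast0LessThan)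
  also have "\<dots> = (\<Prod>i<n. a i) * det (mat n n (\<lambda>(i, j). b i j))"
    by (simp add: det_def sum_distrib_left)
  finally show ?thesis .
qed

lemma lambdaY_flat:
  assumes "d \<ge> 1" "j < N"
  shows "lambdaY N (Yflat d N) (Suc j) = - int (j * (d - 1))"
  using assms by (auto simp: lambdaY_def Yflat_def of_nat_diff algebra_simps)

lemma flat_matrix_entry:
  fixes w :: complex
  assumes "d \<ge> 1" "w \<noteq> 0" "w + 1 \<noteq> 0" "j < N"
  shows "w ^ (N - Suc j) * (w + 1) powi lambdaY N (Yflat d N) (Suc j)
       = w ^ (N - 1) * inverse (bethe_base d w) ^ j"
proof -
  have "(w + 1) powi lambdaY N (Yflat d N) (Suc j) = inverse ((w + 1) ^ (j * (d - 1)))"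
    using assms by (simp add: lambdaY_flat power_int_minus flip: of_nat_mult)
  also have "\<dots> = inverse ((w + 1) ^ (d - 1)) ^ j"
    by (simp add: power_inverse mult.commute flip: power_mult)
  finally have "(w + 1) powi lambdaY N (Yflat d N) (Suc j) = inverse ((w + 1) ^ (d - 1)) ^ j" .
  moreover have "w ^ (N - 1) = w ^ (N - Suc j) * w ^ j"
    using assms(4) by (simp flip: power_add)
  ultimately show ?thesis
    using assms by (simp add: bethe_base_def power_mult_distrib power_inverse field_simps)
qed

lemma G_flat_eq:
  assumes d: "d \<ge> 1" and h: "bij_betw h {..<N} W"
    and W: "\<And>w. w \<in> W \<Longrightarrow> w \<noteq> 0 \<and> w + 1 \<noteq> 0"
  shows "G N (lambdaY N (Yflat d N)) W = (\<Prod>w\<in>W. w) ^ (N - 1)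
    * det (mat N N (\<lambda>(i, j). inverse (bethe_base d (h i)) ^ j)) / det (vandermonde N h)"
proof -
  have "h i \<noteq> 0 \<and> h i + 1 \<noteq> 0" if "i < N" for i
    using W h that by (auto simp: bij_betw_def)
  then have "mat N N (\<lambda>(i, j). h i ^ (N - Suc j) * (h i + 1) powi lambdaY N (Yflat d N) (Suc j))
      = mat N N (\<lambda>(i, j). h i ^ (N - 1) * inverse (bethe_base d (h i)) ^ j)"
    using d by (intro eq_matI) (auto simp: flat_matrix_entry)
  moreover have "(\<Prod>i<N. h i ^ (N - 1)) = (\<Prod>w\<in>W. w) ^ (N - 1)"
    using prod.reindex_bij_betw[OF h, of "\<lambda>w. w ^ (N - 1)"] by (simp add: prod_power_distrib)
  ultimately show ?thesis
    by (simp add: G_eq_enumeration[OF h] det_mat_scale_rows)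
qed

lemma G_flat_eq_0_if_same_base:
  assumes d: "d \<ge> 1" and W: "finite W" "card W = N" "\<And>w. w \<in> W \<Longrightarrow> w \<noteq> 0 \<and> w + 1 \<noteq> 0"
    and xy: "x \<in> W" "y \<in> W" "x \<noteq> y" "bethe_base d x = bethe_base d y"
  shows "G N (lambdaY N (Yflat d N)) W = 0"
proof -
  obtain h where h: "bij_betw h {..<N} W"
    using ex_bij_betw_nat_finite[OF W(1)] W(2) by (auto simp: atLeast0LessThan)
  then have "x \<in> h ` {..<N}" "y \<in> h ` {..<N}" using xy by (auto simp: bij_betw_def)
  then obtain i j where ij: "i < N" "j < N" "h i = x" "h j = y" by auto
  with xy have "i \<noteq> j" by auto
  have "det (mat N N (\<lambda>(i, j). inverse (bethe_base d (h i)) ^ j)) = 0"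
    by (rule det_identical_rows[OF _ \<open>i \<noteq> j\<close> ij(1,2)]) (auto simp: ij xy intro!: eq_vecI)
  then show ?thesis by (simp add: G_flat_eq[OF d h W(3)])
qed

lemma poly_eq_smult_prod_roots:
  fixes P :: "'a :: idom poly" and a :: "'b \<Rightarrow> 'a"
  assumes I: "finite I" and inj: "inj_on a I" and deg: "degree P \<le> card I"
    and roots: "\<And>i. i \<in> I \<Longrightarrow> poly P (a i) = 0"
  shows "P = smult (coeff P (card I)) (\<Prod>i\<in>I. [:- a i, 1:])"
proof -
  define Q where "Q = (\<Prod>i\<in>I. [:- a i, 1:])"
  have deg_Q: "degree Q = card I"
    unfolding Q_def by (subst degree_prod_sum_eq) auto
  have "coeff Q (card I) = 1"
    using lead_coeff_prod[of "\<lambda>i. [:- a i, 1:]" I] deg_Q by (simp add: Q_def)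
  define D where "D = P - smult (coeff P (card I)) Q"
  have "degree D \<le> card I"
    unfolding D_def using deg deg_Q by (intro degree_diff_le) auto
  moreover have "coeff D (card I) = 0"
    using \<open>coeff Q (card I) = 1\<close> by (simp add: D_def)
  ultimately have small_degree: "degree D < card I" if "D \<noteq> 0"
    using that leading_coeff_0_iff[of D] by (cases "degree D = card I") auto
  have "a ` I \<subseteq> {x. poly D x = 0}"
    using roots I by (auto simp: D_def Q_def poly_prod intro!: prod_zero)
  have "D = 0"
  proof (rule ccontr)
    assume "D \<noteq> 0"
    have "card I = card (a ` I)" using card_image[OF inj] by simp
    also have "\<dots> \<le> card {x. poly D x = 0}"
      using \<open>a ` I \<subseteq> _\<close> poly_roots_finite[OF \<open>D \<noteq> 0\<close>] by (rule card_mono[rotated])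
    also have "\<dots> \<le> degree D"
      using \<open>D \<noteq> 0\<close> by (rule card_poly_roots_bound)
    finally show False using small_degree[OF \<open>D \<noteq> 0\<close>] by simp
  qed
  then show ?thesis by (simp add: D_def Q_def)
qed

lemma det_vandermonde_fun_upd:
  fixes f :: "nat \<Rightarrow> 'a :: idom"
  assumes k: "k < n" and inj: "inj_on f ({..<n} - {k})"
  shows "det (vandermonde n (f(k := x))) * (\<Prod>i\<in>{..<n} - {k}. y - f i)
       = det (vandermonde n (f(k := y))) * (\<Prod>i\<in>{..<n} - {k}. x - f i)"
proof -
  define V where "V x = vandermonde n (f(k := x))" for x
  define C where "C j = cofactor (V 0) k j" for j
  define I where "I = {..<n} - {k}"
  have "cofactor (V x) k j = C j" for x j
  proof -
    have "mat_delete (V x) k j = mat_delete (V 0) k j"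
      by (rule eq_matI) (auto simp: mat_delete_def V_def vandermonde_def)
    then show ?thesis by (simp add: C_def cofactor_def)
  qed
  then have laplace: "det (V x) = (\<Sum>j<n. C j * x ^ (n - Suc j))" for x
    using laplace_expansion_row[of "V x" n k] k by (simp add: V_def vandermonde_def mult.commute)
  define P where "P = (\<Sum>j<n. monom (C j) (n - Suc j))"
  have P: "poly P x = det (V x)" for x
    by (simp add: P_def laplace poly_sum poly_monom)
  have "degree P \<le> card I"
    unfolding P_def I_def using k
    by (intro degree_sum_le) (auto intro: order.trans[OF degree_monom_le])
  moreover have "poly P (f i) = 0" if "i \<in> I" for i
  proof -
    have "i \<noteq> k" "i < n" using that by (auto simp: I_def)
    then have "det (V (f i)) = 0"
      by (intro det_identical_rows[OF _ \<open>i \<noteq> k\<close> \<open>i < n\<close> k])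
         (auto simp: V_def vandermonde_def k intro!: eq_vecI)
    then show ?thesis by (simp add: P)
  qed
  ultimately have factored: "P = smult (coeff P (card I)) (\<Prod>i\<in>I. [:- f i, 1:])"
    using inj by (intro poly_eq_smult_prod_roots) (auto simp: I_def)
  have "det (V x) = coeff P (card I) * (\<Prod>i\<in>I. x - f i)" for x
    unfolding P[symmetric] by (subst factored) (simp add: poly_prod)
  then show ?thesis by (simp add: V_def I_def)
qed

lemma bij_betw_fun_upd_replace:
  assumes f: "bij_betw f A R" and k: "k \<in> A" "f k = v" and u: "u \<notin> R"
  shows "bij_betw (f(k := u)) A (R \<union> {u} - {v})"
proof -
  have "inj_on (f(k := u)) A"
    using f u by (intro inj_on_fun_updI) (auto simp: bij_betw_def)
  moreover have "bij_betw f (A - {k}) (R - {v})"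
    using f k by (intro bij_betw_DiffI) (auto simp: bij_betw_def)
  then have "f(k := u) ` A = R \<union> {u} - {v}"
    using f k u by (auto simp: fun_upd_image bij_betw_def)
  ultimately show ?thesis by (simp add: bij_betw_def)
qed

lemma det_vandermonde_replace:
  fixes f :: "nat \<Rightarrow> 'a :: idom"
  assumes f: "bij_betw f {..<n} R" and k: "k < n" "f k = v"
  shows "det (vandermonde n (f(k := u))) * (\<Prod>x\<in>R - {v}. v - x)
       = det (vandermonde n f) * (\<Prod>x\<in>R - {v}. u - x)"
proof -
  have rest: "bij_betw f ({..<n} - {k}) (R - {v})"
    using f k by (intro bij_betw_DiffI) (auto simp: bij_betw_def)
  then have "(\<Prod>x\<in>R - {v}. w - x) = (\<Prod>i\<in>{..<n} - {k}. w - f i)" for w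
    by (simp add: prod.reindex_bij_betw)
  then show ?thesis
    using det_vandermonde_fun_upd[OF k(1) bij_betw_imp_inj_on[OF rest], of u v] k
    by (simp add: fun_upd_idem)
qed

lemma G_flat_fun_upd:
  assumes d: "d \<ge> 1" and f: "bij_betw f {..<N} R" and k: "k < N" "f k = v" and u: "u \<notin> R"
    and same_base: "bethe_base d u = bethe_base d v"
    and nonzero: "\<And>w. w \<in> R \<union> {u} \<Longrightarrow> w \<noteq> 0 \<and> w + 1 \<noteq> 0"
  shows "G N (lambdaY N (Yflat d N)) (R \<union> {u} - {v}) = (\<Prod>w\<in>R \<union> {u} - {v}. w) ^ (N - 1)
    * det (mat N N (\<lambda>(i, j). inverse (bethe_base d (f i)) ^ j)) / det (vandermonde N (f(k := u)))"
proof -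
  have "det (mat N N (\<lambda>(i, j). inverse (bethe_base d ((f(k := u)) i)) ^ j))
      = det (mat N N (\<lambda>(i, j). inverse (bethe_base d (f i)) ^ j))"
    using same_base k by (intro arg_cong[where f = det] eq_matI) auto
  moreover have f': "bij_betw (f(k := u)) {..<N} (R \<union> {u} - {v})"
    using f k u by (intro bij_betw_fun_upd_replace) auto
  moreover have "w \<noteq> 0 \<and> w + 1 \<noteq> 0" if "w \<in> R \<union> {u} - {v}" for w
    using nonzero that by blast
  ultimately show ?thesis
    using G_flat_eq[OF d f'] by simp
qed

lemma G_flat_replace:
  assumes d: "d \<ge> 1" and R: "finite R" "card R = N"
    and v: "v \<in> R" and u: "u \<notin> R" and same_base: "bethe_base d u = bethe_base d v"
    and nonzero: "\<And>w. w \<in> R \<union> {u} \<Longrightarrow> w \<noteq> 0 \<and> w + 1 \<noteq> 0"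
    and G_R_nonzero: "G N (lambdaY N (Yflat d N)) R \<noteq> 0"
  shows "G N (lambdaY N (Yflat d N)) (R \<union> {u} - {v}) / G N (lambdaY N (Yflat d N)) R
       = u ^ (N - 1) * (\<Prod>x\<in>R - {v}. v - x) / (v ^ (N - 1) * (\<Prod>x\<in>R - {v}. u - x))"
proof -
  define W where "W = R \<union> {u} - {v}"
  obtain f where f: "bij_betw f {..<N} R"
    using ex_bij_betw_nat_finite[OF R(1)] R(2) by (auto simp: atLeast0LessThan)
  then obtain k where k: "k < N" "f k = v"
    using v by (auto simp: bij_betw_def)
  define core where "core = det (mat N N (\<lambda>(i, j). inverse (bethe_base d (f i)) ^ j))"
  have G_W: "G N (lambdaY N (Yflat d N)) W
      = (\<Prod>w\<in>W. w) ^ (N - 1) * core / det (vandermonde N (f(k := u)))"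
    unfolding W_def core_def using G_flat_fun_upd[OF d f k u same_base nonzero] .
  have G_R: "G N (lambdaY N (Yflat d N)) R = (\<Prod>w\<in>R. w) ^ (N - 1) * core / det (vandermonde N f)"
    using G_flat_eq[OF d f] nonzero by (auto simp: core_def)
  have vdm: "det (vandermonde N (f(k := u))) * (\<Prod>x\<in>R - {v}. v - x)
      = det (vandermonde N f) * (\<Prod>x\<in>R - {v}. u - x)"
    using det_vandermonde_replace[OF f k] .
  have "W = insert u (R - {v})" using u v by (auto simp: W_def)
  then have "(\<Prod>w\<in>W. w) * v = (\<Prod>w\<in>R. w) * u"
    using R(1) u prod.remove[OF R(1) v, of "\<lambda>w. w"] by simp
  then have nodes: "(\<Prod>w\<in>W. w) ^ (N - 1) * v ^ (N - 1) = (\<Prod>w\<in>R. w) ^ (N - 1) * u ^ (N - 1)"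
    by (metis power_mult_distrib)
  let ?V = "det (vandermonde N f)" and ?V' = "det (vandermonde N (f(k := u)))"
    and ?p = "\<lambda>w. \<Prod>x\<in>R - {v}. w - x"
  have "core \<noteq> 0" "det (vandermonde N f) \<noteq> 0"
    using G_R_nonzero by (auto simp: G_R)
  moreover have "(\<Prod>x\<in>R - {v}. v - x) \<noteq> 0" "(\<Prod>x\<in>R - {v}. u - x) \<noteq> 0"
    "(\<Prod>w\<in>R. w) \<noteq> 0" "v \<noteq> 0"
    using R u v nonzero by auto
  moreover from this vdm \<open>det (vandermonde N f) \<noteq> 0\<close>
  have "det (vandermonde N (f(k := u))) \<noteq> 0" by auto
  ultimately have "G N (lambdaY N (Yflat d N)) W / G N (lambdaY N (Yflat d N)) R
      = ((\<Prod>w\<in>W. w) ^ (N - 1) * v ^ (N - 1)) * (?V * ?p u)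
        / (v ^ (N - 1) * ?p u * ((\<Prod>w\<in>R. w) ^ (N - 1) * ?V'))"
    by (simp add: G_W G_R field_simps)
  also have "\<dots> = ((\<Prod>w\<in>R. w) ^ (N - 1) * u ^ (N - 1)) * (?V' * ?p v)
        / (v ^ (N - 1) * ?p u * ((\<Prod>w\<in>R. w) ^ (N - 1) * ?V'))"
    by (simp only: nodes vdm[symmetric])
  also have "\<dots> = u ^ (N - 1) * ?p v / (v ^ (N - 1) * ?p u)"
    using \<open>(\<Prod>w\<in>R. w) \<noteq> 0\<close> \<open>?V' \<noteq> 0\<close> by (simp add: field_simps)
  finally show ?thesis by (simp add: W_def)
qed

lemma deriv_prod_diff:
  fixes R :: "'a :: real_normed_field set"
  assumes "finite R" "v \<in> R"
  shows "deriv (\<lambda>w. \<Prod>x\<in>R. w - x) v = (\<Prod>x\<in>R - {v}. v - x)"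
proof -
  have "((\<lambda>w. \<Prod>x\<in>R. w - x) has_field_derivative (\<Sum>x\<in>R. 1 * (\<Prod>y\<in>R - {x}. v - y))) (at v)"
    by (rule has_field_derivative_prod) (auto intro!: derivative_eq_intros)
  moreover have "(\<Sum>x\<in>R. 1 * (\<Prod>y\<in>R - {x}. v - y)) = (\<Prod>y\<in>R - {v}. v - y)"
    using assms by (subst sum.remove[of _ v]) (auto intro!: sum.neutral prod_zero bexI[of _ v])
  ultimately show ?thesis by (metis DERIV_imp_deriv)
qed

lemma G_flat_quotient:
  assumes d: "d \<ge> 1" and R: "finite R" "card R = N" and v: "v \<in> R" and u: "u \<notin> R"
    and nonzero: "\<And>w. w \<in> R \<union> {u} \<Longrightarrow> w \<noteq> 0 \<and> w + 1 \<noteq> 0"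
    and G_R_nonzero: "G N (lambdaY N (Yflat d N)) R \<noteq> 0"
    and base_hit: "bethe_base d u \<in> bethe_base d ` R"
  shows "G N (lambdaY N (Yflat d N)) (R \<union> {u} - {v}) / G N (lambdaY N (Yflat d N)) R =
    (if u * (u + 1) ^ (d - 1) = v * (v + 1) ^ (d - 1)
     then deriv (\<lambda>w. \<Prod>x\<in>R. w - x) v * u ^ N * (u + 1) ^ (d - 1)
          / ((\<Prod>x\<in>R. u - x) * v ^ N * (v + 1) ^ (d - 1)) * (u - v)
     else 0)"
proof (cases "bethe_base d u = bethe_base d v")
  case False
  from base_hit obtain v' where "v' \<in> R" "bethe_base d v' = bethe_base d u" by auto
  moreover have "card (R \<union> {u} - {v}) = N"
    using R v u card_gt_0_iff[of R] by (auto simp: insert_Diff_if card_insert_if)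
  ultimately have "G N (lambdaY N (Yflat d N)) (R \<union> {u} - {v}) = 0"
    using R v u nonzero False d
    by (intro G_flat_eq_0_if_same_base[where x = u and y = v']) auto
  then show ?thesis using False by (simp add: bethe_base_def)
next
  case True
  define P where "P w = (\<Prod>x\<in>R - {v}. w - x)" for w
  have "N \<ge> 1" using R v by (auto simp: Suc_le_eq card_gt_0_iff)
  then have power_split: "w ^ N * (w + 1) ^ (d - 1) = w ^ (N - 1) * bethe_base d w" for w
    by (simp add: bethe_base_def power_eq_if mult_ac)
  have "deriv (\<lambda>w. \<Prod>x\<in>R. w - x) v = P v"
    using deriv_prod_diff[OF R(1) v] by (simp add: P_def)
  moreover have "(\<Prod>x\<in>R. u - x) = (u - v) * P u"
    using prod.remove[OF R(1) v, of "\<lambda>x. u - x"] by (simp add: P_def)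
  ultimately have "deriv (\<lambda>w. \<Prod>x\<in>R. w - x) v * u ^ N * (u + 1) ^ (d - 1)
        / ((\<Prod>x\<in>R. u - x) * v ^ N * (v + 1) ^ (d - 1)) * (u - v)
      = P v * (u ^ (N - 1) * bethe_base d v) / ((u - v) * P u * (v ^ (N - 1) * bethe_base d v)) * (u - v)"
    using True by (simp only: mult.assoc power_split)
  also have "\<dots> = u ^ (N - 1) * P v / (v ^ (N - 1) * P u)"
  proof -
    have "u - v \<noteq> 0" "bethe_base d v \<noteq> 0" "P u \<noteq> 0" "v \<noteq> 0"
      using R u v nonzero[of v] by (auto simp: bethe_base_def P_def)
    then show ?thesis by (simp add: field_simps)
  qed
  also have "\<dots> = G N (lambdaY N (Yflat d N)) (R \<union> {u} - {v}) / G N (lambdaY N (Yflat d N)) R"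
    unfolding P_def using G_flat_replace[OF d R v u True nonzero G_R_nonzero] by simp
  finally show ?thesis using True by (simp add: bethe_base_def)
qed

theorem lemma10p3:
  fixes d N :: nat and z v u :: complex
  assumes "d \<ge> 2" and "N \<ge> 1"
    and "0 < cmod z" and "cmod z < r0 d"
    and "E_flat d N z \<noteq> 0"
    and "v \<in> Rset d N z" and "u \<in> Lset d N z"
  shows "ch_flat d N v u z =
    (if u * (u + 1) ^ (d - 1) = v * (v + 1) ^ (d - 1)
     then deriv (qR d N z) v * u ^ N * (u + 1) ^ (d - 1)
          / (qR d N z u * v ^ N * (v + 1) ^ (d - 1)) * (u - v)
     else 0)"
proof -
  have u: "u \<in> roots_eq d N z" "u \<notin> Rset d N z"
    using assms(7) by (auto simp: Lset_def Rset_def)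
  have "bethe_base d u \<in> bethe_base d ` Rset d N z"
    using bij_betw_bethe_base_Rset[OF assms(1-4)] u(1)
    by (auto simp: bij_betw_def roots_eq_bethe_base)
  moreover have "w \<noteq> 0 \<and> w + 1 \<noteq> 0" if "w \<in> Rset d N z \<union> {u}" for w
    using that u(1) roots_eq_nonzero[of _ d N z] assms(1-3) by (auto simp: Rset_def)
  moreover have "qR d N z = (\<lambda>w. \<Prod>x\<in>Rset d N z. w - x)"
    by (simp add: fun_eq_iff qR_def)
  ultimately show ?thesis
    using G_flat_quotient[OF _ Rset_finite_card[OF assms(1-4)] assms(6) u(2)] assms(1,5)
    by (simp add: ch_flat_def E_flat_def)
qed

end
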